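(* Let $k,d$ be positive integers, let $\ell = \lceil \frac{d}{k+1}\rceil - 1$ and $d' = d + \left\lceil k\ell\left(\frac{d}{k+1} - \frac{1}{2}(\ell+1)\right)\right\rceil$. Let $T$ be a tree with at least $d'+1$ edges. Then $T$ contains a vertex $r$ such that for every edge $e \in E(T)$ incident to $r$, the connected component of $T - e$ containing $r$ has at least $\ell+1$ edges. *)

theory Defs
  imports Complex_Main
begin

definition simple_graph :: "'a set \<Rightarrow> 'a set set \<Rightarrow> bool" where
  "simple_graph V E \<longleftrightarrow> finite V \<and> (\<forall>e\<in>E. \<exists>u v. e = {u, v} \<and> u \<noteq> v \<and> u \<in> V \<and> v \<in> V)"

definition adj_rel :: "'a set set \<Rightarrow> ('a \<times> 'a) set" where
  "adj_rel E = {(u, v). {u, v} \<in> E}"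

definition reachable :: "'a set set \<Rightarrow> 'a \<Rightarrow> 'a \<Rightarrow> bool" where
  "reachable E u v \<longleftrightarrow> (u, v) \<in> (adj_rel E)\<^sup>*"

definition connected_graph :: "'a set \<Rightarrow> 'a set set \<Rightarrow> bool" where
  "connected_graph V E \<longleftrightarrow> (\<forall>u\<in>V. \<forall>v\<in>V. reachable E u v)"

definition is_cycle :: "'a set set \<Rightarrow> 'a list \<Rightarrow> bool" where
  "is_cycle E cs \<longleftrightarrow> length cs \<ge> 3 \<and> distinct cs \<and>
     (\<forall>i. Suc i < length cs \<longrightarrow> {cs ! i, cs ! Suc i} \<in> E) \<and>
     {last cs, hd cs} \<in> E"

definition acyclic_graph :: "'a set set \<Rightarrow> bool" where
  "acyclic_graph E \<longleftrightarrow> (\<nexists>cs. is_cycle E cs)"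

definition is_tree :: "'a set \<Rightarrow> 'a set set \<Rightarrow> bool" where
  "is_tree V E \<longleftrightarrow> simple_graph V E \<and> V \<noteq> {} \<and> connected_graph V E \<and> acyclic_graph E"

definition component_edges :: "'a set set \<Rightarrow> 'a \<Rightarrow> 'a set set" where
  "component_edges E r = {e \<in> E. \<forall>x\<in>e. reachable E r x}"

end

theory Submission
  imports Defs "HOL-Library.Transitive_Closure_Table"
begin

(* For an edge ab of a tree, call the component of T - ab containing a the branch at a away
   from b. Among all branches with at most l edges choose a largest one, say at a away from b.
   Then b is the wanted vertex: the branch at b away from a contains the remaining edges, hence
   at least |E| - 1 - l > l of them; and for every other neighbour t of b, the branch at b away
   from t strictly contains the branch at a away from b (it also contains ab), so by maximality
   it has more than l edges. *)

lemma reachable_iff_rtranclp: "reachable E u v \<longleftrightarrow> (\<lambda>x y. {x, y} \<in> E)\<^sup>*\<^sup>* u v"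
  unfolding reachable_def adj_rel_def by (simp add: rtranclp_rtrancl_eq)

lemma reachable_refl: "reachable E u u"
  unfolding reachable_def by simp

lemma reachable_into_reachable: "reachable E u v \<Longrightarrow> {v, w} \<in> E \<Longrightarrow> reachable E u w"
  unfolding reachable_def adj_rel_def by (simp add: rtrancl_into_rtrancl)

lemma converse_reachable_into_reachable: "{u, v} \<in> E \<Longrightarrow> reachable E v w \<Longrightarrow> reachable E u w"
  unfolding reachable_def adj_rel_def by (simp add: converse_rtrancl_into_rtrancl)

lemma reachable_mono: "reachable E u v \<Longrightarrow> E \<subseteq> F \<Longrightarrow> reachable F u v"
  unfolding reachable_iff_rtranclp by (erule rtranclp_mono[THEN predicate2D, rotated]) auto

lemma reachable_Diff_edge_cases:
  assumes "reachable E a x"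
  shows "reachable (E - {{a, b}}) a x \<or> reachable (E - {{a, b}}) b x"
  using assms unfolding reachable_def[of E]
proof (induction rule: rtrancl_induct)
  case base
  then show ?case by (simp add: reachable_refl)
next
  case (step y z)
  then have "{y, z} \<in> E" unfolding adj_rel_def by simp
  show ?case
  proof (cases "{y, z} = {a, b}")
    case True
    then have "z = a \<or> z = b" by (metis doubleton_eq_iff)
    then show ?thesis using reachable_refl by metis
  next
    case False
    with \<open>{y, z} \<in> E\<close> have "{y, z} \<in> E - {{a, b}}" by simp
    with step.IH show ?thesis using reachable_into_reachable by metis
  qed
qed

lemma reachable_Diff_edge_at_unreachable:
  assumes "reachable E u v" and "\<not> reachable E u w" and "w \<in> e"
  shows "reachable (E - {e}) u v"
  using assms(1) unfolding reachable_def[of E]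
proof (induction rule: rtrancl_induct)
  case base
  then show ?case by (simp add: reachable_refl)
next
  case (step y z)
  then have "{y, z} \<in> E" unfolding adj_rel_def by simp
  have "reachable E u y" "reachable E u z"
    using step.hyps unfolding reachable_def by auto
  with assms(2,3) have "{y, z} \<noteq> e" by auto
  with \<open>{y, z} \<in> E\<close> show ?case by (simp add: reachable_into_reachable[OF step.IH])
qed

lemma acyclic_edge_is_bridge:
  assumes "acyclic_graph E" and "{a, b} \<in> E" and "a \<noteq> b"
  shows "\<not> reachable (E - {{a, b}}) a b"
proof
  assume "reachable (E - {{a, b}}) a b"
  then obtain xs where "rtrancl_path (\<lambda>x y. {x, y} \<in> E - {{a, b}}) a xs b"
    by (auto simp: reachable_iff_rtranclp rtranclp_eq_rtrancl_path)
  then obtain ys where path: "rtrancl_path (\<lambda>x y. {x, y} \<in> E - {{a, b}}) a ys b"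
    and "distinct (a # ys)"
    by (rule rtrancl_path_distinct)
  \<comment> \<open>the path is neither empty nor the removed edge itself\<close>
  have "length ys \<ge> 2"
    using path \<open>a \<noteq> b\<close> by (cases rule: rtrancl_path.cases) (auto elim: rtrancl_path.cases)
  moreover have "{(a # ys) ! i, (a # ys) ! Suc i} \<in> E" if "Suc i < length (a # ys)" for i
    using rtrancl_path_nth[OF path, of i] that by simp
  moreover have "{last (a # ys), hd (a # ys)} \<in> E"
    using rtrancl_path_last[OF path] \<open>length ys \<ge> 2\<close> assms(2) by (auto simp: insert_commute)
  ultimately have "is_cycle E (a # ys)"
    using \<open>distinct (a # ys)\<close> unfolding is_cycle_def by auto
  then show False
    using assms(1) unfolding acyclic_graph_def by blast
qed

lemma simple_graph_edgeE:
  assumes "simple_graph V E" and "e \<in> E"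
  obtains u v where "e = {u, v}" and "u \<noteq> v" and "u \<in> V" and "v \<in> V"
  using assms unfolding simple_graph_def by blast

lemma simple_graph_edge_distinct: "simple_graph V E \<Longrightarrow> {u, v} \<in> E \<Longrightarrow> u \<noteq> v"
  by (erule simple_graph_edgeE) (auto simp: doubleton_eq_iff)

lemma simple_graph_finite_edges:
  assumes "simple_graph V E"
  shows "finite E"
proof (rule finite_subset)
  show "E \<subseteq> Pow V"
    using simple_graph_edgeE[OF assms] by (metis PowI empty_subsetI insert_subset subsetI)
  show "finite (Pow V)"
    using assms unfolding simple_graph_def by simp
qed

lemma simple_graph_edge_at:
  assumes "simple_graph V E" and "e \<in> E" and "r \<in> e"
  obtains t where "e = {r, t}" and "r \<noteq> t" and "r \<in> V"
proof -
  obtain u v where "e = {u, v}" "u \<noteq> v" "u \<in> V" "v \<in> V"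
    using simple_graph_edgeE[OF assms(1,2)] .
  with assms(3) that show ?thesis
    by (metis insert_commute insert_iff singletonD)
qed

definition branch :: "'a set set \<Rightarrow> 'a \<Rightarrow> 'a \<Rightarrow> 'a set set" where
  "branch E a b = component_edges (E - {{a, b}}) a"

lemma branch_subset: "branch E a b \<subseteq> E - {{a, b}}"
  unfolding branch_def component_edges_def by auto

lemma finite_branch: "finite E \<Longrightarrow> finite (branch E a b)"
  using branch_subset by (metis finite_Diff finite_subset)

lemma branches_cover:
  assumes "simple_graph V E" and "connected_graph V E" and "{a, b} \<in> E"
  shows "E - {{a, b}} \<subseteq> branch E a b \<union> branch E b a"
proof
  fix f assume f: "f \<in> E - {{a, b}}"
  then obtain x y where xy: "f = {x, y}" "x \<in> V"
    using simple_graph_edgeE[OF assms(1)] by (metis DiffD1)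
  have "a \<in> V"
    using simple_graph_edge_at[OF assms(1,3)] by blast
  with xy assms(2) have "reachable E a x"
    unfolding connected_graph_def by blast
  then obtain c where c: "c = a \<or> c = b" "reachable (E - {{a, b}}) c x"
    using reachable_Diff_edge_cases[of E a x b] by blast
  moreover have "reachable (E - {{a, b}}) c y"
    using reachable_into_reachable[OF c(2)] f xy by simp
  ultimately have "f \<in> component_edges (E - {{a, b}}) c"
    using f xy unfolding component_edges_def by auto
  moreover have "{b, a} = {a, b}"
    by blast
  ultimately show "f \<in> branch E a b \<union> branch E b a"
    using c(1) unfolding branch_def by auto
qed

lemma card_branches:
  assumes "simple_graph V E" and "connected_graph V E" and "{a, b} \<in> E"
  shows "card E \<le> card (branch E a b) + card (branch E b a) + 1"
proof -
  have "finite E"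
    using simple_graph_finite_edges[OF assms(1)] .
  then have "card E = card (E - {{a, b}}) + 1"
    using card_Suc_Diff1[OF _ assms(3)] by simp
  also have "card (E - {{a, b}}) \<le> card (branch E a b \<union> branch E b a)"
    using branches_cover[OF assms] \<open>finite E\<close> by (intro card_mono finite_UnI finite_branch)
  also have "\<dots> \<le> card (branch E a b) + card (branch E b a)"
    by (rule card_Un_le)
  finally show ?thesis by simp
qed

lemma card_branch_less:
  assumes "finite E" and "{a, b} \<in> E" and "{b, t} \<in> E" and "t \<noteq> a"
    and bridge: "\<not> reachable (E - {{a, b}}) a b"
  shows "card (branch E a b) < card (branch E b t)"
proof -
  have "{b, a} = {a, b}"
    by blast
  moreover from \<open>t \<noteq> a\<close> have "{a, b} \<noteq> {b, t}"
    by (auto simp: doubleton_eq_iff)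
  ultimately have ba: "{b, a} \<in> E - {{b, t}}"
    using assms(2) by simp
  have reach: "reachable (E - {{b, t}}) b x" if "reachable (E - {{a, b}}) a x" for x
  proof -
    have "reachable (E - {{a, b}} - {{b, t}}) a x"
      using reachable_Diff_edge_at_unreachable[OF that bridge] by simp
    then have "reachable (E - {{b, t}}) a x"
      by (rule reachable_mono) blast
    with ba show ?thesis
      by (rule converse_reachable_into_reachable)
  qed
  have "insert {a, b} (branch E a b) \<subseteq> branch E b t"
  proof
    fix f assume "f \<in> insert {a, b} (branch E a b)"
    then consider "f = {a, b}" | "f \<in> branch E a b"
      by blast
    then show "f \<in> branch E b t"
    proof cases
      case 1
      have "reachable (E - {{b, t}}) b a"
        using converse_reachable_into_reachable[OF ba reachable_refl] .
      with 1 \<open>{b, a} = {a, b}\<close> ba reachable_refl[of _ b] show ?thesis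
        unfolding branch_def component_edges_def by simp
    next
      case 2
      then have "f \<in> E - {{a, b}}" and f_reach: "\<forall>x\<in>f. reachable (E - {{a, b}}) a x"
        unfolding branch_def component_edges_def by simp_all
      with bridge have "f \<noteq> {b, t}"
        by blast
      with \<open>f \<in> E - {{a, b}}\<close> f_reach reach show ?thesis
        unfolding branch_def component_edges_def by simp
    qed
  qed
  then have "card (insert {a, b} (branch E a b)) \<le> card (branch E b t)"
    using finite_branch[OF assms(1)] by (rule card_mono[rotated])
  moreover have "{a, b} \<notin> branch E a b"
    using branch_subset[of E a b] by blast
  ultimately show ?thesis
    using finite_branch[OF assms(1)] by simp
qed

lemma large_branch_beyond_maximal_small_branch:
  assumes tree: "is_tree V E" and size: "2 * L + 2 \<le> card E"
    and ab: "{a, b} \<in> E" "card (branch E a b) \<le> L"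
    and maximal: "\<And>x y. {x, y} \<in> E \<Longrightarrow> card (branch E x y) \<le> L \<Longrightarrow>
      card (branch E x y) \<le> card (branch E a b)"
    and bt: "{b, t} \<in> E"
  shows "L < card (branch E b t)"
proof (cases "t = a")
  case True
  have "card E \<le> card (branch E a b) + card (branch E b a) + 1"
    using card_branches[OF _ _ ab(1)] tree unfolding is_tree_def by blast
  with size ab(2) have "L < card (branch E b a)"
    by linarith
  with True show ?thesis
    by simp
next
  case False
  have sg: "simple_graph V E" and acyclic: "acyclic_graph E"
    using tree unfolding is_tree_def by auto
  have "\<not> reachable (E - {{a, b}}) a b"
    using acyclic_edge_is_bridge[OF acyclic ab(1) simple_graph_edge_distinct[OF sg ab(1)]] .
  then have "card (branch E a b) < card (branch E b t)"
    by (rule card_branch_less[OF simple_graph_finite_edges[OF sg] ab(1) bt False])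
  with maximal[OF bt] show ?thesis by linarith
qed

lemma tree_has_vertex_with_large_branches:
  assumes tree: "is_tree V E" and size: "2 * L + 2 \<le> card E"
  shows "\<exists>r\<in>V. \<forall>e\<in>E. r \<in> e \<longrightarrow> L + 1 \<le> card (component_edges (E - {e}) r)"
proof -
  have sg: "simple_graph V E"
    using tree unfolding is_tree_def by blast
  have "\<exists>r\<in>V. \<forall>t. {r, t} \<in> E \<longrightarrow> L < card (branch E r t)"
  proof (cases "\<exists>x y. {x, y} \<in> E \<and> card (branch E x y) \<le> L")
    case False
    moreover obtain r where "r \<in> V"
      using tree unfolding is_tree_def by blast
    ultimately show ?thesis
      by (auto simp: not_le)
  next
    case True
    let ?small = "\<lambda>n. \<exists>x y. {x, y} \<in> E \<and> card (branch E x y) = n \<and> n \<le> L"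
    from True obtain n where "?small n"
      by blast
    then obtain m where "?small m" and m_max: "\<And>n. ?small n \<Longrightarrow> n \<le> m"
      using Nat.ex_has_greatest_nat[of ?small n L] by blast
    then obtain a b where ab: "{a, b} \<in> E" "card (branch E a b) \<le> L" "card (branch E a b) = m"
      by blast
    have maximal: "card (branch E x y) \<le> card (branch E a b)"
      if "{x, y} \<in> E" "card (branch E x y) \<le> L" for x y
      using m_max[of "card (branch E x y)"] that ab(3) by blast
    have "L < card (branch E b t)" if "{b, t} \<in> E" for t
      by (rule large_branch_beyond_maximal_small_branch[OF tree size ab(1,2) maximal that])
    moreover have "b \<in> V"
      using simple_graph_edge_at[OF sg ab(1), of b] by blast
    ultimately show ?thesis
      by blast
  qed
  then obtain r where "r \<in> V" and large: "\<And>t. {r, t} \<in> E \<Longrightarrow> L < card (branch E r t)"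
    by blast
  have "L + 1 \<le> card (component_edges (E - {e}) r)" if edge: "e \<in> E" "r \<in> e" for e
  proof -
    obtain t where "e = {r, t}"
      using simple_graph_edge_at[OF sg edge] .
    with large edge show ?thesis
      unfolding branch_def by fastforce
  qed
  with \<open>r \<in> V\<close> show ?thesis
    by blast
qed

lemma ceiling_minus_one_bounds:
  fixes q :: real
  assumes "q > 0"
  shows "0 \<le> \<lceil>q\<rceil> - 1" and "real_of_int (\<lceil>q\<rceil> - 1) < q"
  using assms ceiling_correct[of q] zero_less_ceiling[of q] by linarith+

lemma correction_term_nonneg:
  fixes q c :: real and l :: int
  assumes "q > 0" and "l = \<lceil>q\<rceil> - 1" and "c \<ge> 0"
  shows "0 \<le> c * real_of_int l * (q - (real_of_int l + 1) / 2)"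
proof (cases "l = 0")
  case True
  then show ?thesis by simp
next
  case False
  have "0 \<le> l" and "l < q"
    using ceiling_minus_one_bounds[OF assms(1)] assms(2) by simp_all
  with False have "1 \<le> real_of_int l"
    by simp
  with \<open>l < q\<close> have "(real_of_int l + 1) / 2 \<le> q"
    by (simp add: field_simps)
  with \<open>0 \<le> l\<close> assms(3) show ?thesis
    by simp
qed

lemma double_ceiling_fraction_minus_one_less:
  fixes k d :: nat
  assumes "k > 0" and "d > 0"
  shows "2 * (\<lceil>real d / real (k + 1)\<rceil> - 1) < int d"
proof -
  define q where "q = real d / real (k + 1)"
  have "q > 0"
    using assms(2) by (simp add: q_def)
  define l where "l = \<lceil>q\<rceil> - 1"
  have l: "0 \<le> l" "l < q"
    using ceiling_minus_one_bounds[OF \<open>q > 0\<close>] by (simp_all add: l_def)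
  have "real_of_int (2 * l) \<le> l * (k + 1)"
    using mult_left_mono[of 2 "real k + 1" "real_of_int l"] l(1) assms(1) by (simp add: ac_simps)
  also have "\<dots> < q * (k + 1)"
    using l(2) by (simp add: mult_strict_right_mono)
  also have "\<dots> = d"
    by (simp add: q_def)
  finally show ?thesis
    unfolding l_def q_def by linarith
qed

theorem lemma2p5:
  fixes k d :: nat and V :: "'a set" and E :: "'a set set" and l d' :: int
  assumes "k > 0" and "d > 0"
    and "l = \<lceil>real d / real (k + 1)\<rceil> - 1"
    and "d' = int d + \<lceil>real k * real_of_int l * (real d / real (k + 1) - (real_of_int l + 1) / 2)\<rceil>"
    and "is_tree V E"
    and "int (card E) \<ge> d' + 1"
  shows "\<exists>r\<in>V. \<forall>e\<in>E. r \<in> e \<longrightarrow> int (card (component_edges (E - {e}) r)) \<ge> l + 1"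
proof -
  have pos: "0 < real d / real (k + 1)"
    using assms(2) by simp
  have "0 \<le> l"
    using ceiling_minus_one_bounds(1)[OF pos] assms(3) by simp
  have "0 \<le> real k * real_of_int l * (real d / real (k + 1) - (real_of_int l + 1) / 2)"
    using correction_term_nonneg[OF pos assms(3)] by simp
  then have "int d \<le> d'"
    using assms(4) by linarith
  moreover have "2 * l < int d"
    using double_ceiling_fraction_minus_one_less[OF assms(1,2)] assms(3) by simp
  ultimately have "2 * nat l + 2 \<le> card E"
    using assms(6) \<open>0 \<le> l\<close> by linarith
  then obtain r where "r \<in> V"
    and "\<forall>e\<in>E. r \<in> e \<longrightarrow> nat l + 1 \<le> card (component_edges (E - {e}) r)"
    using tree_has_vertex_with_large_branches[OF assms(5)] by blast
  with \<open>0 \<le> l\<close> show ?thesis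
    by force
qed

end
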